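(* Let $(Z_n)_{n\ge0}$ be a Galton--Watson process with $Z_0=1$ and offspring distribution $F$ on $\{0,1,2,\dots\}$ with mean $m:=\mathbb E\xi>1$, and let $W_n:=Z_n/m^n$. Assume $\sigma^2:=\mathrm{Var}\,\xi<\infty$. Then for every $A>0$, $$\Pr\{W_n>x\}\ge\Bigl(1-\frac{\sigma^2}{(m^2-m)A^2}+o(1)\Bigr)\sum_{i=0}^{n-1}m^i\overline F\bigl(m^{i+1}x+A\sqrt{m^{i+1}x}\bigr)$$ as $x\to\infty$ uniformly in $n$. In particular, if additionally $F$ is $\sqrt x$-insensitive, then $$\Pr\{W_n>x\}\ge(1+o(1))\sum_{i=0}^{n-1}m^i\overline F(m^{i+1}x)$$ as $x\to\infty$ uniformly in $n$.
   Context: The process is defined by $Z_{n+1}=\sum_{i=1}^{Z_n}\xi_i^{(n)}$, where $\xi_i^{(n)}$, $i\ge1$, $n\ge0$, are i.i.d. copies of a random variable $\xi$ with distribution $F$ on $\{0,1,2,\dots\}$; $\overline F(x):=\Pr\{\xi>x\}$ for real $x$. $F$ is $\sqrt x$-insensitive if $\overline F(x+\sqrt x)\sim\overline F(x)$ as $x\to\infty$. The $o(1)$ terms tend to $0$ as $x\to\infty$ uniformly over $n\ge1$. *)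

theory Defs
  imports "HOL-Probability.Probability" "HOL-Library.Landau_Symbols"
begin

fun iid_sum :: "nat pmf \<Rightarrow> nat \<Rightarrow> nat pmf" where
  "iid_sum p 0 = return_pmf 0"
| "iid_sum p (Suc k) = bind_pmf p (\<lambda>a. map_pmf (\<lambda>b. a + b) (iid_sum p k))"

text \<open>Distribution of Z_n for the Galton--Watson process with Z_0 = 1 and offspring law p:
  Z_{n+1} is the sum of Z_n i.i.d. copies of xi, independent of Z_n.\<close>
fun gw :: "nat pmf \<Rightarrow> nat \<Rightarrow> nat pmf" where
  "gw p 0 = return_pmf 1"
| "gw p (Suc n) = bind_pmf (gw p n) (iid_sum p)"

definition off_mean :: "nat pmf \<Rightarrow> real" where
  "off_mean p = measure_pmf.expectation p real"

definition off_var :: "nat pmf \<Rightarrow> real" where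
  "off_var p = measure_pmf.variance p real"

definition Fbar :: "nat pmf \<Rightarrow> real \<Rightarrow> real" where
  "Fbar p x = measure_pmf.prob p {k. real k > x}"

definition sqrt_insensitive :: "nat pmf \<Rightarrow> bool" where
  "sqrt_insensitive p \<longleftrightarrow> (\<lambda>x. Fbar p (x + sqrt x)) \<sim>[at_top] (\<lambda>x. Fbar p x)"

end

theory Submission
  imports Defs
begin

text \<open>Call an individual of generation \<open>i < n\<close> marked if it has more than
  \<open>m ^ (i + 1) * x + A * sqrt (m ^ (i + 1) * x)\<close> children and more than \<open>m ^ n * x\<close> descendants in
  generation \<open>n\<close>; a marked individual forces \<open>W\<^sub>n > x\<close>. Generation \<open>i\<close> contains on average
  \<open>m ^ i * Fbar p (\<dots>)\<close> individuals with such a large family, and by Chebyshev's inequality the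
  descendants of a large family exceed \<open>m ^ n * x\<close> with probability at least
  \<open>1 - \<sigma>\<^sup>2 / ((m\<^sup>2 - m) * A\<^sup>2) - o(1)\<close>. Hence the number \<open>N\<close> of marked individuals has
  \<open>E N \<ge> (1 - \<sigma>\<^sup>2 / ((m\<^sup>2 - m) * A\<^sup>2) - o(1)) * S\<close>, where \<open>S\<close> is the sum in the bound, while
  finite variance gives \<open>E (N * (N - 1)) = O(S / x)\<close>; the claim follows from
  \<open>P(N > 0) \<ge> E N - E (N * (N - 1))\<close>. For \<open>\<surd>x\<close>-insensitive \<open>F\<close> the shift by \<open>A * sqrt y\<close> costs
  only a factor \<open>1 - o(1)\<close>, for every fixed \<open>A\<close>.\<close>

lemma iid_sum_add:
  "iid_sum p (a + b) = bind_pmf (iid_sum p a) (\<lambda>u. map_pmf (\<lambda>v. u + v) (iid_sum p b))"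
proof (induction a)
  case 0
  have "(+) (0::nat) = id" by auto
  then show ?case by (simp add: bind_return_pmf pmf.map_id)
next
  case (Suc a)
  show ?case
    by (simp add: Suc bind_assoc_pmf map_bind_pmf bind_map_pmf map_pmf_comp add.assoc[symmetric])
qed

lemma bind_iid_sum_iid_sum:
  "bind_pmf (iid_sum q k) (iid_sum p) = iid_sum (bind_pmf q (iid_sum p)) k"
proof (induction k)
  case (Suc k)
  have "bind_pmf (iid_sum q (Suc k)) (iid_sum p)
      = bind_pmf q (\<lambda>a. bind_pmf (iid_sum q k)
          (\<lambda>b. bind_pmf (iid_sum p a) (\<lambda>u. map_pmf (\<lambda>v. u + v) (iid_sum p b))))"
    by (simp add: bind_assoc_pmf bind_map_pmf iid_sum_add)
  also have "\<dots> = bind_pmf q (\<lambda>a. bind_pmf (iid_sum p a)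
          (\<lambda>u. map_pmf (\<lambda>v. u + v) (bind_pmf (iid_sum q k) (iid_sum p))))"
    by (subst bind_commute_pmf) (simp add: map_bind_pmf)
  also have "\<dots> = iid_sum (bind_pmf q (iid_sum p)) (Suc k)"
    by (simp add: Suc bind_assoc_pmf)
  finally show ?case .
qed (simp add: bind_return_pmf)

lemma iid_sum_return_1: "iid_sum (return_pmf 1) k = return_pmf k"
  by (induction k) (simp_all add: bind_return_pmf)

lemma gw_Suc_first_generation: "gw p (Suc n) = bind_pmf p (iid_sum (gw p n))"
proof (induction n)
  case 0
  have "iid_sum (return_pmf 1) = return_pmf"
    using iid_sum_return_1 by fastforce
  then show ?case by (simp add: bind_return_pmf bind_return_pmf')
next
  case (Suc n)
  have "gw p (Suc (Suc n)) = bind_pmf (bind_pmf p (iid_sum (gw p n))) (iid_sum p)"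
    using Suc by simp
  then show ?case by (simp add: bind_assoc_pmf bind_iid_sum_iid_sum)
qed

fun iid_sum_pair :: "(nat \<times> nat) pmf \<Rightarrow> nat \<Rightarrow> (nat \<times> nat) pmf" where
  "iid_sum_pair q 0 = return_pmf (0, 0)"
| "iid_sum_pair q (Suc k) =
     bind_pmf q (\<lambda>a. map_pmf (\<lambda>b. (fst a + fst b, snd a + snd b)) (iid_sum_pair q k))"

lemma map_fst_iid_sum_pair: "map_pmf fst (iid_sum_pair q k) = iid_sum (map_pmf fst q) k"
proof (induction k)
  case (Suc k)
  then show ?case by (simp add: map_bind_pmf bind_map_pmf map_pmf_comp flip: Suc)
qed simp

lemma map_snd_iid_sum_pair: "map_pmf snd (iid_sum_pair q k) = iid_sum (map_pmf snd q) k"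
proof (induction k)
  case (Suc k)
  then show ?case by (simp add: map_bind_pmf bind_map_pmf map_pmf_comp flip: Suc)
qed simp

lemma nn_integral_iid_sum_pair_fst:
  "(\<integral>\<^sup>+zc. f (fst zc) \<partial>iid_sum_pair q k) = (\<integral>\<^sup>+z. f z \<partial>iid_sum (map_pmf fst q) k)"
  by (simp flip: map_fst_iid_sum_pair)

lemma nn_integral_iid_sum_pair_snd:
  "(\<integral>\<^sup>+zc. f (snd zc) \<partial>iid_sum_pair q k) = (\<integral>\<^sup>+c. f c \<partial>iid_sum (map_pmf snd q) k)"
  by (simp flip: map_snd_iid_sum_pair)

lemma iid_sum_pair_support:
  assumes "\<And>z c. (z, c) \<in> set_pmf q \<Longrightarrow> c > 0 \<Longrightarrow> T < real z"
  shows "(z, c) \<in> set_pmf (iid_sum_pair q k) \<Longrightarrow> c > 0 \<Longrightarrow> T < real z"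
proof (induction k arbitrary: z c)
  case (Suc k)
  then obtain a b where ab: "a \<in> set_pmf q" "b \<in> set_pmf (iid_sum_pair q k)"
    "z = fst a + fst b" "c = snd a + snd b" by auto
  show ?case
  proof (cases "snd a > 0")
    case True
    then show ?thesis using assms[of "fst a" "snd a"] ab by simp
  next
    case False
    then show ?thesis using Suc.IH[of "fst b" "snd b"] Suc.prems ab by simp
  qed
qed simp

lemma nn_integral_iid_sum:
  "(\<integral>\<^sup>+z. of_nat z \<partial>iid_sum q k) = of_nat k * (\<integral>\<^sup>+z. of_nat z \<partial>q)"
proof (induction k)
  case (Suc k)
  have "(\<integral>\<^sup>+z. of_nat z \<partial>iid_sum q (Suc k))
     = (\<integral>\<^sup>+a. (\<integral>\<^sup>+b. of_nat a + of_nat b \<partial>iid_sum q k) \<partial>q)"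
    by simp
  also have "\<dots> = (\<integral>\<^sup>+a. of_nat a + of_nat k * (\<integral>\<^sup>+z. of_nat z \<partial>q) \<partial>q)"
    by (simp add: nn_integral_add Suc measure_pmf.emeasure_space_1)
  also have "\<dots> = of_nat (Suc k) * (\<integral>\<^sup>+z. of_nat z \<partial>q)"
    by (simp add: nn_integral_add measure_pmf.emeasure_space_1 algebra_simps)
  finally show ?case .
qed simp

lemma falling2_add: "(a + b) * (a + b - 1) = a * (a - 1) + b * (b - 1) + 2 * a * b" for a b :: nat
  by (cases a; cases b; simp add: algebra_simps)

lemma nn_integral_iid_sum_falling2:
  "(\<integral>\<^sup>+z. of_nat (z * (z - 1)) \<partial>iid_sum q k)
     = of_nat k * (\<integral>\<^sup>+z. of_nat (z * (z - 1)) \<partial>q) + of_nat (k * (k - 1)) * (\<integral>\<^sup>+z. of_nat z \<partial>q)\<^sup>2"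
proof (induction k)
  case (Suc k)
  define \<mu> where "\<mu> = (\<integral>\<^sup>+z. of_nat z \<partial>q)"
  define w where "w = (\<integral>\<^sup>+z. of_nat (z * (z - 1)) \<partial>q)"
  have split: "(of_nat ((a + b) * (a + b - 1)) :: ennreal)
      = of_nat (a * (a - 1)) + of_nat (b * (b - 1)) + 2 * of_nat a * of_nat b" for a b :: nat
    unfolding falling2_add by simp
  have "(\<integral>\<^sup>+b. of_nat ((a + b) * (a + b - 1)) \<partial>iid_sum q k)
      = of_nat (a * (a - 1)) + (of_nat k * w + of_nat (k * (k - 1)) * \<mu>\<^sup>2) + 2 * of_nat a * (of_nat k * \<mu>)"
    for a :: nat
  proof -
    have "(\<integral>\<^sup>+b. of_nat ((a + b) * (a + b - 1)) \<partial>iid_sum q k)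
       = of_nat (a * (a - 1)) + (\<integral>\<^sup>+b. of_nat (b * (b - 1)) \<partial>iid_sum q k)
         + 2 * of_nat a * (\<integral>\<^sup>+b. of_nat b \<partial>iid_sum q k)"
      unfolding split
      by (simp add: nn_integral_add nn_integral_cmult measure_pmf.emeasure_space_1 mult.assoc
          del: of_nat_mult)
    then show ?thesis by (simp only: Suc nn_integral_iid_sum \<mu>_def w_def)
  qed
  then have "(\<integral>\<^sup>+z. of_nat (z * (z - 1)) \<partial>iid_sum q (Suc k))
      = w + (of_nat k * w + of_nat (k * (k - 1)) * \<mu>\<^sup>2) + 2 * \<mu> * (of_nat k * \<mu>)"
    by (simp add: nn_integral_add nn_integral_cmult measure_pmf.emeasure_space_1
        \<mu>_def w_def mult.assoc mult.commute[of _ "of_nat k * _"] del: of_nat_mult)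
  also have "\<dots> = of_nat (Suc k) * w + of_nat (Suc k * (Suc k - 1)) * \<mu>\<^sup>2"
  proof -
    have "Suc k * (Suc k - 1) = k * (k - 1) + 2 * k"
      by (cases k) simp_all
    then have "(of_nat (Suc k * (Suc k - 1)) :: ennreal) = of_nat (k * (k - 1)) + 2 * of_nat k"
      by (simp only: of_nat_add of_nat_mult of_nat_numeral)
    then show ?thesis by (simp add: algebra_simps power2_eq_square)
  qed
  finally show ?case by (simp add: \<mu>_def w_def)
qed simp

lemma nn_integral_gw: "(\<integral>\<^sup>+z. of_nat z \<partial>gw p n) = (\<integral>\<^sup>+k. of_nat k \<partial>p) ^ n"
proof (induction n)
  case (Suc n)
  have "(\<integral>\<^sup>+z. of_nat z \<partial>gw p (Suc n)) = (\<integral>\<^sup>+z. of_nat z * (\<integral>\<^sup>+k. of_nat k \<partial>p) \<partial>gw p n)"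
    by (simp add: nn_integral_iid_sum)
  then show ?case by (simp add: nn_integral_multc Suc mult.commute)
qed simp

lemma chebyshev_factorial_moments:
  fixes D :: "nat pmf" and a b t :: real
  assumes m1: "(\<integral>\<^sup>+z. of_nat z \<partial>D) = ennreal a"
    and m2: "(\<integral>\<^sup>+z. of_nat (z * (z - 1)) \<partial>D) = ennreal b"
    and a0: "a \<ge> 0" and b0: "b \<ge> 0" and ta: "t < a"
  shows "measure_pmf.prob D {z. real z \<le> t} * (a - t)\<^sup>2 \<le> b + a - a\<^sup>2"
proof -
  let ?A = "{z. real z \<le> t}"
  let ?P = "measure_pmf.prob D ?A"
  have pointwise: "ennreal ((a - t)\<^sup>2) * indicator ?A z + ennreal (2 * a) * of_nat z
      \<le> of_nat (z * (z - 1)) + of_nat z + ennreal (a\<^sup>2)" for z :: nat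
  proof -
    have r: "real (z * (z - 1)) + real z = (real z)\<^sup>2"
      by (cases z) (simp_all add: power2_eq_square algebra_simps)
    have "(a - t)\<^sup>2 * indicator ?A z + 2 * a * real z \<le> real (z * (z - 1)) + real z + a\<^sup>2"
    proof (cases "real z \<le> t")
      case True
      then have "(a - t)\<^sup>2 \<le> (a - real z)\<^sup>2" using ta by (intro power_mono) auto
      then show ?thesis using True unfolding r by (simp add: power2_diff)
    next
      case False
      have "0 \<le> (a - real z)\<^sup>2" by simp
      then show ?thesis using False unfolding r by (simp add: power2_diff)
    qed
    then have "ennreal ((a - t)\<^sup>2 * indicator ?A z + 2 * a * real z)
        \<le> ennreal (real (z * (z - 1)) + real z + a\<^sup>2)" by (rule ennreal_leI)
    then show ?thesis using a0
      by (simp add: ennreal_mult ennreal_of_nat_eq_real_of_nat indicator_def of_bool_def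
          split: if_splits del: of_nat_mult)
  qed
  have "(\<integral>\<^sup>+z. ennreal ((a - t)\<^sup>2) * indicator ?A z + ennreal (2 * a) * of_nat z \<partial>D)
      \<le> (\<integral>\<^sup>+z. of_nat (z * (z - 1)) + of_nat z + ennreal (a\<^sup>2) \<partial>D)"
    by (rule nn_integral_mono) (rule pointwise)
  also have "\<dots> = ennreal b + ennreal a + ennreal (a\<^sup>2)"
    by (simp add: nn_integral_add m1 m2[simplified] measure_pmf.emeasure_space_1)
  finally have "ennreal ((a - t)\<^sup>2) * ennreal ?P + ennreal (2 * a) * ennreal a
      \<le> ennreal b + ennreal a + ennreal (a\<^sup>2)"
    by (simp add: nn_integral_add nn_integral_cmult nn_integral_cmult_indicator m1
        measure_pmf.emeasure_eq_measure)
  then have "ennreal ((a - t)\<^sup>2 * ?P + 2 * a * a) \<le> ennreal (b + a + a\<^sup>2)"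
    using a0 b0 by (simp add: ennreal_mult)
  then have "(a - t)\<^sup>2 * ?P + 2 * a * a \<le> b + a + a\<^sup>2"
    using a0 b0 by (subst (asm) ennreal_le_iff) auto
  then show ?thesis by (simp add: power2_eq_square algebra_simps)
qed

lemma off_var_nonneg: "off_var p \<ge> 0"
  unfolding off_var_def by simp

lemma
  fixes p :: "nat pmf"
  assumes var_fin: "integrable (measure_pmf p) (\<lambda>k. (real k)\<^sup>2)"
  shows nn_integral_eq_off_mean: "(\<integral>\<^sup>+k. of_nat k \<partial>p) = ennreal (off_mean p)"
    and nn_integral_falling2_eq_off_var:
      "(\<integral>\<^sup>+k. of_nat (k * (k - 1)) \<partial>p) = ennreal (off_var p + (off_mean p)\<^sup>2 - off_mean p)"
proof -
  define m where "m = off_mean p"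
  have i1: "integrable (measure_pmf p) (\<lambda>k. real k)"
  proof (rule Bochner_Integration.integrable_bound[OF var_fin])
    have "real k \<le> (real k)\<^sup>2" for k :: nat
      using le_square[of k] by (simp add: power2_eq_square flip: of_nat_mult)
    then show "AE k in measure_pmf p. norm (real k) \<le> norm ((real k)\<^sup>2)"
      by simp
  qed simp
  show "(\<integral>\<^sup>+k. of_nat k \<partial>p) = ennreal (off_mean p)"
    by (simp add: off_mean_def ennreal_of_nat_eq_real_of_nat nn_integral_eq_integral[OF i1])
  have falling2: "real (k * (k - 1)) = (real k)\<^sup>2 - real k" for k :: nat
    by (cases k) (simp_all add: power2_eq_square algebra_simps)
  have i2: "integrable (measure_pmf p) (\<lambda>k. real (k * (k - 1)))"
    unfolding falling2 using var_fin i1 by simp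
  have "off_var p = (\<integral>k. (real k)\<^sup>2 - 2 * m * real k + m\<^sup>2 \<partial>p)"
    by (simp add: off_var_def m_def off_mean_def power2_diff algebra_simps)
  also have "\<dots> = (\<integral>k. (real k)\<^sup>2 \<partial>p) - m\<^sup>2"
    using var_fin i1 by (simp add: m_def off_mean_def power2_eq_square)
  finally have "(\<integral>k. real (k * (k - 1)) \<partial>p) = off_var p + m\<^sup>2 - m"
    unfolding falling2 using var_fin i1 by (simp add: m_def off_mean_def)
  moreover have "(\<integral>\<^sup>+k. of_nat (k * (k - 1)) \<partial>p) = ennreal (\<integral>k. real (k * (k - 1)) \<partial>p)"
    by (subst ennreal_of_nat_eq_real_of_nat, rule nn_integral_eq_integral[OF i2]) auto
  ultimately show "(\<integral>\<^sup>+k. of_nat (k * (k - 1)) \<partial>p) = ennreal (off_var p + (off_mean p)\<^sup>2 - off_mean p)"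
    by (simp add: m_def)
qed

lemma Fbar_nonneg: "Fbar p t \<ge> 0"
  by (simp add: Fbar_def)

lemma Fbar_antimono: "t \<le> t' \<Longrightarrow> Fbar p t' \<le> Fbar p t"
  unfolding Fbar_def by (intro measure_pmf.finite_measure_mono) auto

lemma emeasure_Fbar: "emeasure (measure_pmf p) {k. real k > t} = ennreal (Fbar p t)"
  by (simp add: Fbar_def measure_pmf.emeasure_eq_measure)

lemma sqrt_insensitiveD:
  assumes "sqrt_insensitive p" "d < 1"
  shows "eventually (\<lambda>y. d * Fbar p y \<le> Fbar p (y + sqrt y)) at_top"
proof -
  let ?q = "\<lambda>y. if Fbar p (y + sqrt y) = 0 \<and> Fbar p y = 0 then 1 else Fbar p (y + sqrt y) / Fbar p y"
  have "(?q \<longlongrightarrow> 1) at_top"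
    using assms(1) unfolding sqrt_insensitive_def by (rule asymp_equivD)
  then have "eventually (\<lambda>y. ?q y > d) at_top"
    using assms(2) by (rule order_tendstoD)
  then show ?thesis
  proof (rule eventually_mono)
    fix y assume q: "?q y > d"
    show "d * Fbar p y \<le> Fbar p (y + sqrt y)"
    proof (cases "Fbar p y = 0")
      case False
      then have "Fbar p y > 0" using Fbar_nonneg[of p y] by simp
      then show ?thesis using q by (simp add: pos_less_divide_eq less_imp_le)
    qed (simp add: Fbar_nonneg)
  qed
qed

lemma funpow_sqrt_shift_ge:
  "y \<ge> 0 \<Longrightarrow> ((\<lambda>z. z + sqrt z) ^^ j) y \<ge> y + real j * sqrt y"
proof (induction j)
  case (Suc j)
  have "real j * sqrt y \<ge> 0" using Suc.prems by simp
  then have "((\<lambda>z. z + sqrt z) ^^ j) y \<ge> y" using Suc by linarith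
  then have "sqrt (((\<lambda>z. z + sqrt z) ^^ j) y) \<ge> sqrt y" by simp
  moreover have "real (Suc j) * sqrt y = real j * sqrt y + sqrt y" by (simp add: algebra_simps)
  moreover have "((\<lambda>z. z + sqrt z) ^^ Suc j) y
      = ((\<lambda>z. z + sqrt z) ^^ j) y + sqrt (((\<lambda>z. z + sqrt z) ^^ j) y)" by simp
  ultimately show ?case using Suc by linarith
qed simp

text \<open>With \<open>N = \<lceil>A\<rceil>\<close>, the shift by \<open>A * sqrt y\<close> is dominated by \<open>N\<close> shifts by a square root, each of
  which loses at most a factor \<open>d = 1 - (1 - \<delta>) / N\<close>, and \<open>d ^ N \<ge> \<delta>\<close> by Bernoulli's inequality.\<close>
lemma sqrt_insensitive_scaled:
  assumes ins: "sqrt_insensitive p" and A0: "A > 0" and \<delta>1: "\<delta> < 1"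
  shows "eventually (\<lambda>y. \<delta> * Fbar p y \<le> Fbar p (y + A * sqrt y)) at_top"
proof (cases "\<delta> \<le> 0")
  case True
  then show ?thesis
    by (intro always_eventually allI order_trans[OF mult_nonpos_nonneg Fbar_nonneg]) (simp_all add: Fbar_nonneg)
next
  case False
  let ?s = "\<lambda>z. z + sqrt z"
  define N where "N = nat \<lceil>A\<rceil>"
  have NA: "real N \<ge> A" and N1: "N \<ge> 1" using A0 unfolding N_def by linarith+
  define d where "d = 1 - (1 - \<delta>) / real N"
  have step: "(1 - \<delta>) / real N \<le> 1 - \<delta>" using N1 \<delta>1 by (simp add: divide_le_eq)
  have d1: "d < 1" and d0: "d \<ge> 0" using \<delta>1 N1 False step by (simp_all add: d_def)
  have "1 + real N * (- ((1 - \<delta>) / real N)) \<le> (1 + (- ((1 - \<delta>) / real N))) ^ N"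
    using False step by (intro Bernoulli_inequality) simp
  then have dN: "\<delta> \<le> d ^ N" using N1 by (simp add: d_def)
  obtain y0 where y0: "\<And>y. y \<ge> y0 \<Longrightarrow> d * Fbar p y \<le> Fbar p (?s y)"
    using sqrt_insensitiveD[OF ins d1] by (auto simp: eventually_at_top_linorder)
  have iterate: "d ^ j * Fbar p y \<le> Fbar p ((?s ^^ j) y)" if y: "y \<ge> max y0 0" for y j
  proof (induction j)
    case (Suc j)
    have "real j * sqrt y \<ge> 0" using y by simp
    then have "(?s ^^ j) y \<ge> y" using funpow_sqrt_shift_ge[of y j] y by linarith
    then have "d * Fbar p ((?s ^^ j) y) \<le> Fbar p ((?s ^^ Suc j) y)" using y0 y by simp
    moreover have "d * (d ^ j * Fbar p y) \<le> d * Fbar p ((?s ^^ j) y)"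
      using Suc d0 by (intro mult_left_mono)
    ultimately show ?case by simp
  qed simp
  show ?thesis
  proof (rule eventually_at_top_linorderI)
    fix y assume y: "y \<ge> max y0 0"
    have "y + A * sqrt y \<le> y + real N * sqrt y" using NA y by (intro add_left_mono mult_right_mono) auto
    also have "\<dots> \<le> (?s ^^ N) y" using funpow_sqrt_shift_ge[of y N] y by simp
    finally have "Fbar p ((?s ^^ N) y) \<le> Fbar p (y + A * sqrt y)" by (rule Fbar_antimono)
    moreover have "\<delta> * Fbar p y \<le> d ^ N * Fbar p y" using dN Fbar_nonneg[of p y] by (rule mult_right_mono)
    ultimately show "\<delta> * Fbar p y \<le> Fbar p (y + A * sqrt y)" using iterate[OF y, of N] by simp
  qed
qed

locale gw_second_moment =
  fixes p :: "nat pmf" and m \<sigma>2 :: real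
  assumes mean: "(\<integral>\<^sup>+k. of_nat k \<partial>p) = ennreal m"
    and falling2: "(\<integral>\<^sup>+k. of_nat (k * (k - 1)) \<partial>p) = ennreal (\<sigma>2 + m\<^sup>2 - m)"
    and mean_gt_1: "m > 1"
    and var_nonneg: "\<sigma>2 \<ge> 0"
begin

lemma sq_minus_mean_pos: "m\<^sup>2 - m > 0"
  using mean_gt_1 by (simp add: power2_eq_square)

lemma nn_integral_gw_mean: "(\<integral>\<^sup>+z. of_nat z \<partial>gw p n) = ennreal (m ^ n)"
  using mean_gt_1 by (simp add: nn_integral_gw mean ennreal_power)

lemma nn_integral_gw_falling2:
  "(\<integral>\<^sup>+z. of_nat (z * (z - 1)) \<partial>gw p n) = ennreal ((\<sigma>2 / (m\<^sup>2 - m) + 1) * (m ^ (2 * n) - m ^ n))"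
proof (induction n)
  case (Suc n)
  define c where "c = \<sigma>2 / (m\<^sup>2 - m) + 1"
  have c0: "c \<ge> 0" using var_nonneg sq_minus_mean_pos by (simp add: c_def)
  have K: "\<sigma>2 + m\<^sup>2 - m = c * (m\<^sup>2 - m)" using sq_minus_mean_pos by (simp add: c_def field_simps)
  have pow: "m ^ n \<le> m ^ (2 * n)" using mean_gt_1 by (intro power_increasing) auto
  have "(\<integral>\<^sup>+z. of_nat (z * (z - 1)) \<partial>gw p (Suc n))
      = (\<integral>\<^sup>+z. of_nat z * ennreal (\<sigma>2 + m\<^sup>2 - m) + of_nat (z * (z - 1)) * ennreal (m\<^sup>2) \<partial>gw p n)"
    using mean_gt_1 by (simp only: gw.simps nn_integral_bind_pmf nn_integral_iid_sum_falling2 mean falling2)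
       (simp add: ennreal_power)
  also have "\<dots> = ennreal (m ^ n) * ennreal (\<sigma>2 + m\<^sup>2 - m) + ennreal (c * (m ^ (2 * n) - m ^ n)) * ennreal (m\<^sup>2)"
    using Suc by (simp add: nn_integral_add nn_integral_multc nn_integral_gw_mean c_def)
  also have "\<dots> = ennreal (m ^ n * (c * (m\<^sup>2 - m)) + c * (m ^ (2 * n) - m ^ n) * m\<^sup>2)"
    using mean_gt_1 c0 pow sq_minus_mean_pos unfolding K by (simp add: ennreal_mult)
  also have "m ^ n * (c * (m\<^sup>2 - m)) + c * (m ^ (2 * n) - m ^ n) * m\<^sup>2 = c * (m ^ (2 * Suc n) - m ^ Suc n)"
    by (simp add: power2_eq_square algebra_simps)
  finally show ?case by (simp add: c_def)
qed simp

lemma prob_iid_sum_gw_le: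
  assumes ks: "s < real k"
  shows "measure_pmf.prob (iid_sum (gw p n) k) {z. real z \<le> m ^ n * s}
           \<le> real k * (\<sigma>2 / (m\<^sup>2 - m)) / (real k - s)\<^sup>2"
proof -
  define \<mu> where "\<mu> = m ^ n"
  define c where "c = \<sigma>2 / (m\<^sup>2 - m) + 1"
  define P where "P = measure_pmf.prob (iid_sum (gw p n) k) {z. real z \<le> m ^ n * s}"
  have \<mu>1: "\<mu> \<ge> 1" using mean_gt_1 by (simp add: \<mu>_def)
  have c1: "c \<ge> 1" using var_nonneg sq_minus_mean_pos by (simp add: c_def)
  have pow: "m ^ (2 * n) = \<mu>\<^sup>2" by (simp add: \<mu>_def power_mult mult.commute flip: power_mult)
  have w0: "c * (\<mu>\<^sup>2 - \<mu>) \<ge> 0" using \<mu>1 c1 by (simp add: power2_eq_square)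
  have "(\<integral>\<^sup>+z. of_nat z \<partial>iid_sum (gw p n) k) = ennreal (real k * \<mu>)"
    using \<mu>1 by (simp only: nn_integral_iid_sum nn_integral_gw_mean)
      (simp add: \<mu>_def ennreal_mult' ennreal_of_nat_eq_real_of_nat)
  moreover have "(\<integral>\<^sup>+z. of_nat (z * (z - 1)) \<partial>iid_sum (gw p n) k)
      = ennreal (real k * (c * (\<mu>\<^sup>2 - \<mu>)) + real (k * (k - 1)) * \<mu>\<^sup>2)"
    unfolding nn_integral_iid_sum_falling2 nn_integral_gw_falling2 nn_integral_gw_mean pow c_def[symmetric]
    using \<mu>1 w0 by (simp add: ennreal_mult' ennreal_of_nat_eq_real_of_nat ennreal_power \<mu>_def del: of_nat_mult)
  ultimately have "P * (real k * \<mu> - m ^ n * s)\<^sup>2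
      \<le> real k * (c * (\<mu>\<^sup>2 - \<mu>)) + real (k * (k - 1)) * \<mu>\<^sup>2 + real k * \<mu> - (real k * \<mu>)\<^sup>2"
    unfolding P_def using ks \<mu>1 w0 by (intro chebyshev_factorial_moments) (auto simp: \<mu>_def)
  also have "\<dots> = real k * (c - 1) * (\<mu>\<^sup>2 - \<mu>)"
  proof -
    have "real (k * (k - 1)) = real k * real k - real k" by (cases k) (auto simp: algebra_simps)
    then show ?thesis by (simp add: power2_eq_square algebra_simps)
  qed
  also have "\<dots> \<le> real k * (c - 1) * \<mu>\<^sup>2" using c1 \<mu>1 by (intro mult_left_mono) auto
  finally have "\<mu>\<^sup>2 * (P * (real k - s)\<^sup>2) \<le> \<mu>\<^sup>2 * (real k * (c - 1))"
    by (simp add: \<mu>_def power2_eq_square algebra_simps)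
  then have "P * (real k - s)\<^sup>2 \<le> real k * (c - 1)"
    using \<mu>1 by (simp add: mult_le_cancel_left_pos)
  then have "P \<le> real k * (c - 1) / (real k - s)\<^sup>2"
    using ks by (simp add: pos_le_divide_eq)
  then show ?thesis by (simp add: P_def c_def)
qed

lemma nn_integral_square: "(\<integral>\<^sup>+k. of_nat (k * k) \<partial>p) = ennreal (\<sigma>2 + m\<^sup>2)"
proof -
  have "k * k = k * (k - 1) + k" for k :: nat
    by (cases k) auto
  then have "(of_nat (k * k) :: ennreal) = of_nat (k * (k - 1)) + of_nat k" for k :: nat
    by (metis of_nat_add)
  then have "(\<integral>\<^sup>+k. of_nat (k * k) \<partial>p) = ennreal (\<sigma>2 + m\<^sup>2 - m) + ennreal m"
    by (simp add: nn_integral_add mean falling2[unfolded One_nat_def] del: of_nat_mult)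
  then show ?thesis
    using var_nonneg sq_minus_mean_pos mean_gt_1 by (simp flip: ennreal_plus)
qed

lemma Fbar_le_second_moment:
  assumes t0: "t > 0"
  shows "Fbar p t \<le> (\<sigma>2 + m\<^sup>2) / t\<^sup>2"
proof -
  have pointwise: "indicator {k. real k > t} k \<le> of_nat (k * k) * ennreal (1 / t\<^sup>2)" for k :: nat
  proof (cases "real k > t")
    case True
    then have "t\<^sup>2 \<le> (real k)\<^sup>2" using t0 by (intro power_mono) auto
    then have "1 \<le> real (k * k) * (1 / t\<^sup>2)" using t0 by (simp add: field_simps power2_eq_square)
    then show ?thesis using True
      by (simp add: ennreal_of_nat_eq_real_of_nat[of "k*k"] ennreal_mult'[symmetric] del: of_nat_mult)
  qed simp
  have "ennreal (Fbar p t) = (\<integral>\<^sup>+k. indicator {k. real k > t} k \<partial>p)"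
    by (simp add: emeasure_Fbar)
  also have "\<dots> \<le> (\<integral>\<^sup>+k. of_nat (k * k) * ennreal (1 / t\<^sup>2) \<partial>p)"
    by (rule nn_integral_mono) (rule pointwise)
  also have "\<dots> = ennreal ((\<sigma>2 + m\<^sup>2) / t\<^sup>2)"
    using var_nonneg
    by (subst nn_integral_multc) (simp_all add: nn_integral_square ennreal_mult'[symmetric] del: of_nat_mult ennreal_plus)
  finally show ?thesis using var_nonneg by (subst (asm) ennreal_le_iff) auto
qed

lemma nn_integral_tail_le:
  assumes t0: "t > 0"
  shows "(\<integral>\<^sup>+k. indicator {k. real k > t} k * of_nat k \<partial>p) \<le> ennreal ((\<sigma>2 + m\<^sup>2) / t)"
proof -
  have "indicator {k. real k > t} k * of_nat k \<le> of_nat (k * k) * ennreal (1 / t)" for k :: nat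
  proof (cases "real k > t")
    case True
    then have "real k \<le> real (k * k) * (1 / t)" using t0 by (simp add: field_simps)
    then show ?thesis using True
      by (simp add: ennreal_of_nat_eq_real_of_nat ennreal_mult'[symmetric] del: of_nat_mult ennreal_plus)
  qed simp
  then have "(\<integral>\<^sup>+k. indicator {k. real k > t} k * of_nat k \<partial>p) \<le> (\<integral>\<^sup>+k. of_nat (k * k) * ennreal (1 / t) \<partial>p)"
    by (intro nn_integral_mono) simp
  also have "\<dots> = ennreal ((\<sigma>2 + m\<^sup>2) / t)"
    using var_nonneg
    by (subst nn_integral_multc) (simp_all add: nn_integral_square ennreal_mult'[symmetric] del: of_nat_mult ennreal_plus)
  finally show ?thesis .
qed

lemma Fbar_series_le:
  assumes y0: "y > 0"
  shows "(\<Sum>i<n. m ^ i * Fbar p (m ^ (i + 1) * y)) \<le> (\<sigma>2 + m\<^sup>2) / (m * (m - 1)) / y\<^sup>2"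
proof -
  have "(\<Sum>i<n. m ^ i * Fbar p (m ^ (i + 1) * y)) \<le> (\<Sum>i<n. m ^ i * ((\<sigma>2 + m\<^sup>2) / (m ^ (i + 1) * y)\<^sup>2))"
    using mean_gt_1 y0 by (intro sum_mono mult_left_mono Fbar_le_second_moment) auto
  also have "\<dots> = (\<sigma>2 + m\<^sup>2) / (m\<^sup>2 * y\<^sup>2) * (\<Sum>i<n. (1 / m) ^ i)"
    unfolding sum_distrib_left
    by (intro sum.cong refl) (use mean_gt_1 y0 in \<open>simp add: field_simps power2_eq_square\<close>)
  also have "\<dots> \<le> (\<sigma>2 + m\<^sup>2) / (m\<^sup>2 * y\<^sup>2) * (1 / (1 - 1 / m))"
    using mean_gt_1 var_nonneg y0 by (intro mult_left_mono less_imp_le[OF geometric_sum_less]) auto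
  also have "\<dots> = (\<sigma>2 + m\<^sup>2) / (m * (m - 1)) / y\<^sup>2"
    using mean_gt_1 y0 by (simp add: field_simps power2_eq_square)
  finally show ?thesis .
qed

definition falling2_const :: real where
  "falling2_const = ((\<sigma>2 + m\<^sup>2 - m) * ((\<sigma>2 + m\<^sup>2) / (m * (m - 1))) + 2 * (\<sigma>2 + m\<^sup>2)) / (m - 1)"

lemma falling2_const_nonneg: "falling2_const \<ge> 0"
  using var_nonneg sq_minus_mean_pos mean_gt_1 by (simp add: falling2_const_def)

text \<open>\<open>falling2_const\<close> solves \<open>\<alpha> * m = \<alpha> + K * C + 2 * (\<sigma>2 + m\<^sup>2)\<close>, where \<open>K = \<sigma>2 + m\<^sup>2 - m\<close> is
  the second factorial moment of \<open>\<xi>\<close> and \<open>C / x\<^sup>2\<close> bounds the tail sum; this is what makes the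
  induction in \<open>marked_falling2_le\<close> close.\<close>
lemma falling2_const_step:
  fixes x S F :: real
  assumes x1: "x \<ge> 1" and S0: "S \<ge> 0" and SB: "S \<le> (\<sigma>2 + m\<^sup>2) / (m * (m - 1)) / (m * x)\<^sup>2"
    and F0: "F \<ge> 0"
  shows "m * (falling2_const / (m * x) * S) + (\<sigma>2 + m\<^sup>2 - m) * S\<^sup>2 + 2 * ((\<sigma>2 + m\<^sup>2) / (m * x)) * S
           \<le> falling2_const / x * (F + m * S)"
proof -
  define K where "K = \<sigma>2 + m\<^sup>2 - m"
  define C where "C = (\<sigma>2 + m\<^sup>2) / (m * (m - 1))"
  define \<alpha> where "\<alpha> = falling2_const"
  have K0: "K \<ge> 0" and C0: "C \<ge> 0" and \<alpha>0: "\<alpha> \<ge> 0"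
    using var_nonneg sq_minus_mean_pos mean_gt_1 falling2_const_nonneg by (simp_all add: K_def C_def \<alpha>_def)
  have "\<alpha> * (m - 1) = K * C + 2 * (\<sigma>2 + m\<^sup>2)"
    using mean_gt_1 by (simp add: \<alpha>_def K_def C_def falling2_const_def)
  then have \<alpha>: "\<alpha> + K * C + 2 * (\<sigma>2 + m\<^sup>2) = \<alpha> * m"
    by (simp add: right_diff_distrib)
  have "x \<le> (m * x)\<^sup>2"
    using mean_gt_1 x1 mult_mono[of 1 "m * x" x "m * x"] by (simp add: power2_eq_square)
  then have "C / (m * x)\<^sup>2 \<le> C / x" using C0 x1 mean_gt_1 by (intro divide_left_mono) simp_all
  then have "S \<le> C / x" using SB by (simp add: C_def)
  then have "K * S\<^sup>2 \<le> K * (C / x * S)"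
    unfolding power2_eq_square using K0 S0 by (intro mult_left_mono mult_right_mono)
  moreover have "2 * ((\<sigma>2 + m\<^sup>2) / (m * x)) * S \<le> 2 * ((\<sigma>2 + m\<^sup>2) / x) * S"
    using mean_gt_1 var_nonneg x1 S0 by (intro mult_right_mono mult_left_mono divide_left_mono) auto
  moreover have "m * (\<alpha> / (m * x) * S) = \<alpha> / x * S" using mean_gt_1 by simp
  ultimately have "m * (\<alpha> / (m * x) * S) + K * S\<^sup>2 + 2 * ((\<sigma>2 + m\<^sup>2) / (m * x)) * S
      \<le> (\<alpha> + K * C + 2 * (\<sigma>2 + m\<^sup>2)) / x * S"
    by (simp add: add_divide_distrib algebra_simps)
  also have "\<dots> = \<alpha> / x * (m * S)"
    unfolding \<alpha> by simp
  also have "\<dots> \<le> \<alpha> / x * (F + m * S)"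
    using \<alpha>0 x1 F0 by (intro mult_left_mono) auto
  finally show ?thesis by (simp add: K_def \<alpha>_def)
qed

end

locale gw_threshold = gw_second_moment +
  fixes A :: real
  assumes A_pos: "A > 0"
begin

definition family_threshold :: "real \<Rightarrow> real" where
  "family_threshold x = m * x + A * sqrt (m * x)"

text \<open>\<open>gw_marked n x\<close> is the joint law of \<open>Z\<^sub>n\<close> and the number of marked individuals, where an
  individual \<open>v\<close> of generation \<open>j < n\<close> is marked if it has more than \<open>family_threshold (m ^ j * x)\<close>
  children and more than \<open>m ^ n * x\<close> descendants in generation \<open>n\<close>. The recursion decomposes the tree
  at the first generation, whose subtrees are independent copies of the process with \<open>x\<close> replaced
  by \<open>m * x\<close>.\<close>
fun gw_marked :: "nat \<Rightarrow> real \<Rightarrow> (nat \<times> nat) pmf" where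
  "gw_marked 0 x = return_pmf (1, 0)"
| "gw_marked (Suc n) x = bind_pmf p (\<lambda>k. map_pmf
     (\<lambda>zc. (fst zc, snd zc + (if real k > family_threshold x \<and> real (fst zc) > m ^ Suc n * x then 1 else 0)))
     (iid_sum_pair (gw_marked n (m * x)) k))"

definition marked_mean :: "nat \<Rightarrow> real \<Rightarrow> ennreal" where
  "marked_mean n x = (\<integral>\<^sup>+zc. of_nat (snd zc) \<partial>gw_marked n x)"

definition marked_falling2 :: "nat \<Rightarrow> real \<Rightarrow> ennreal" where
  "marked_falling2 n x = (\<integral>\<^sup>+zc. of_nat (snd zc * (snd zc - 1)) \<partial>gw_marked n x)"

definition tail_sum :: "nat \<Rightarrow> real \<Rightarrow> real" where
  "tail_sum n x = (\<Sum>i<n. m ^ i * Fbar p (m ^ (i + 1) * x + A * sqrt (m ^ (i + 1) * x)))"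

definition deviation_bound :: "real \<Rightarrow> real" where
  "deviation_bound x = \<sigma>2 / (m\<^sup>2 - m) / A\<^sup>2 + \<sigma>2 / (m\<^sup>2 - m) / (A * sqrt (m * x))"

lemma map_fst_gw_marked: "map_pmf fst (gw_marked n x) = gw p n"
proof (induction n arbitrary: x)
  case (Suc n)
  have "map_pmf fst (gw_marked (Suc n) x) = bind_pmf p (\<lambda>k. map_pmf fst (iid_sum_pair (gw_marked n (m * x)) k))"
    by (simp add: map_bind_pmf map_pmf_comp)
  also have "\<dots> = bind_pmf p (iid_sum (gw p n))"
    by (simp add: map_fst_iid_sum_pair Suc)
  finally show ?case by (simp only: gw_Suc_first_generation)
qed simp

lemma gw_marked_support: "(z, c) \<in> set_pmf (gw_marked n x) \<Longrightarrow> c > 0 \<Longrightarrow> m ^ n * x < real z"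
proof (induction n arbitrary: x z c)
  case (Suc n)
  from Suc.prems(1) obtain k z' c' where k: "(z', c') \<in> set_pmf (iid_sum_pair (gw_marked n (m * x)) k)"
    and zc: "z = z'" "c = c' + (if real k > family_threshold x \<and> real z' > m ^ Suc n * x then 1 else 0)"
    by auto
  show ?case
  proof (cases "real k > family_threshold x \<and> real z' > m ^ Suc n * x")
    case False
    then have "c' > 0" using zc Suc.prems by (auto split: if_splits)
    have "m ^ n * (m * x) < real z'"
      by (rule iid_sum_pair_support[OF _ k \<open>c' > 0\<close>]) (rule Suc.IH)
    then show ?thesis using zc by (simp add: algebra_simps)
  qed (use zc in simp)
qed simp

lemma prob_gw_gt_ge_marked:
  "measure_pmf.prob (gw p n) {k. real k / m ^ n > x} \<ge> measure_pmf.prob (gw_marked n x) {zc. snd zc > 0}"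
proof -
  let ?G = "gw_marked n x"
  have "measure_pmf.prob ?G ({zc. snd zc > 0} \<inter> set_pmf ?G) \<le> measure_pmf.prob ?G {zc. real (fst zc) / m ^ n > x}"
    using gw_marked_support[of _ _ n x] mean_gt_1
    by (intro measure_pmf.finite_measure_mono) (auto simp: pos_less_divide_eq mult.commute)
  also have "\<dots> = measure_pmf.prob (gw p n) {k. real k / m ^ n > x}"
    by (simp flip: map_fst_gw_marked[of n x] add: vimage_def)
  finally show ?thesis by (simp add: measure_Int_set_pmf)
qed

lemma marked_mean_Suc:
  "marked_mean (Suc n) x = (\<integral>\<^sup>+k. of_nat k * marked_mean n (m * x)
     + (if real k > family_threshold x then emeasure (iid_sum (gw p n) k) {z. real z > m ^ Suc n * x} else 0) \<partial>p)"
proof -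
  have "(\<integral>\<^sup>+zc. of_nat (snd zc + (if real k > family_threshold x \<and> real (fst zc) > m ^ Suc n * x then 1 else 0))
        \<partial>iid_sum_pair (gw_marked n (m * x)) k)
      = of_nat k * marked_mean n (m * x)
        + (if real k > family_threshold x then emeasure (iid_sum (gw p n) k) {z. real z > m ^ Suc n * x} else 0)"
    for k
  proof -
    let ?Q = "iid_sum_pair (gw_marked n (m * x)) k"
    have "(\<integral>\<^sup>+zc. of_nat (snd zc + (if real k > family_threshold x \<and> real (fst zc) > m ^ Suc n * x then 1 else 0)) \<partial>?Q)
        = (\<integral>\<^sup>+zc. of_nat (snd zc) \<partial>?Q)
          + (\<integral>\<^sup>+zc. (if real k > family_threshold x then indicator {z. real z > m ^ Suc n * x} (fst zc) else 0) \<partial>?Q)"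
      by (subst nn_integral_add[symmetric]) (auto intro!: nn_integral_cong simp: indicator_def)
    also have "(\<integral>\<^sup>+zc. of_nat (snd zc) \<partial>?Q) = of_nat k * marked_mean n (m * x)"
      by (simp only: nn_integral_iid_sum_pair_snd[where f = of_nat] nn_integral_iid_sum)
        (simp add: marked_mean_def)
    also have "(\<integral>\<^sup>+zc. (if real k > family_threshold x then indicator {z. real z > m ^ Suc n * x} (fst zc) else 0) \<partial>?Q)
        = (if real k > family_threshold x then emeasure (iid_sum (gw p n) k) {z. real z > m ^ Suc n * x} else 0)"
      by (cases "real k > family_threshold x")
        (simp_all add: nn_integral_iid_sum_pair_fst[where f = "indicator _"] map_fst_gw_marked)
    finally show ?thesis .
  qed
  then show ?thesis
    unfolding marked_mean_def gw_marked.simps nn_integral_bind_pmf nn_integral_map_pmf snd_conv fst_conv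
    by (simp add: marked_mean_def)
qed

lemma marked_falling2_Suc_le:
  "marked_falling2 (Suc n) x \<le> (\<integral>\<^sup>+k. of_nat k * marked_falling2 n (m * x)
     + of_nat (k * (k - 1)) * (marked_mean n (m * x))\<^sup>2
     + 2 * indicator {k. real k > family_threshold x} k * (of_nat k * marked_mean n (m * x)) \<partial>p)"
proof -
  let ?I = "\<lambda>k zc. (if real k > family_threshold x \<and> real (fst zc) > m ^ Suc n * x then 1 else (0::nat))"
  let ?big = "\<lambda>k. indicator {k. real k > family_threshold x} k :: ennreal"
  have "(\<integral>\<^sup>+zc. of_nat ((snd zc + ?I k zc) * (snd zc + ?I k zc - 1)) \<partial>iid_sum_pair (gw_marked n (m * x)) k)
      \<le> of_nat k * marked_falling2 n (m * x) + of_nat (k * (k - 1)) * (marked_mean n (m * x))\<^sup>2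
        + 2 * ?big k * (of_nat k * marked_mean n (m * x))" for k
  proof -
    let ?Q = "iid_sum_pair (gw_marked n (m * x)) k"
    have "(of_nat ((c + ?I k zc) * (c + ?I k zc - 1)) :: ennreal) \<le> of_nat (c * (c - 1)) + 2 * ?big k * of_nat c"
      for c :: nat and zc :: "nat \<times> nat"
    proof -
      have "(c + ?I k zc) * (c + ?I k zc - 1) \<le> c * (c - 1) + 2 * (if real k > family_threshold x then 1 else 0) * c"
        by (cases c) auto
      then have "(of_nat ((c + ?I k zc) * (c + ?I k zc - 1)) :: ennreal)
          \<le> of_nat (c * (c - 1) + 2 * (if real k > family_threshold x then 1 else 0) * c)"
        by (simp only: of_nat_le_iff)
      also have "\<dots> = of_nat (c * (c - 1)) + 2 * ?big k * of_nat c"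
        by (cases "real k > family_threshold x") (simp_all add: indicator_def)
      finally show ?thesis .
    qed
    then have "(\<integral>\<^sup>+zc. of_nat ((snd zc + ?I k zc) * (snd zc + ?I k zc - 1)) \<partial>?Q)
        \<le> (\<integral>\<^sup>+zc. of_nat (snd zc * (snd zc - 1)) + 2 * ?big k * of_nat (snd zc) \<partial>?Q)"
      by (intro nn_integral_mono)
    also have "\<dots> = (\<integral>\<^sup>+zc. of_nat (snd zc * (snd zc - 1)) \<partial>?Q) + 2 * ?big k * (\<integral>\<^sup>+zc. of_nat (snd zc) \<partial>?Q)"
      by (simp add: nn_integral_add nn_integral_cmult del: of_nat_mult)
    also have "\<dots> = of_nat k * marked_falling2 n (m * x) + of_nat (k * (k - 1)) * (marked_mean n (m * x))\<^sup>2
        + 2 * ?big k * (of_nat k * marked_mean n (m * x))"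
      by (simp only: nn_integral_iid_sum_pair_snd[where f = of_nat]
          nn_integral_iid_sum_pair_snd[where f = "\<lambda>c. of_nat (c * (c - 1))"] nn_integral_iid_sum
          nn_integral_iid_sum_falling2)
         (simp add: marked_mean_def marked_falling2_def)
    finally show ?thesis .
  qed
  then show ?thesis
    unfolding marked_falling2_def gw_marked.simps nn_integral_bind_pmf nn_integral_map_pmf snd_conv fst_conv
    by (intro nn_integral_mono) (simp add: marked_mean_def marked_falling2_def)
qed

lemma tail_sum_nonneg: "tail_sum n x \<ge> 0"
  unfolding tail_sum_def using mean_gt_1 by (intro sum_nonneg mult_nonneg_nonneg) (auto simp: Fbar_nonneg)

lemma tail_sum_Suc: "tail_sum (Suc n) x = Fbar p (family_threshold x) + m * tail_sum n (m * x)"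
  unfolding tail_sum_def family_threshold_def
  by (simp add: sum.lessThan_Suc_shift sum_distrib_left algebra_simps del: sum.lessThan_Suc)

lemma marked_mean_le_tail_sum: "marked_mean n x \<le> ennreal (tail_sum n x)"
proof (induction n arbitrary: x)
  case (Suc n)
  have "marked_mean (Suc n) x
      \<le> (\<integral>\<^sup>+k. of_nat k * ennreal (tail_sum n (m * x)) + indicator {k. real k > family_threshold x} k \<partial>p)"
    unfolding marked_mean_Suc
    using Suc.IH measure_pmf.emeasure_le_1
    by (intro nn_integral_mono) (auto intro!: add_mono mult_left_mono simp: indicator_def)
  also have "\<dots> = ennreal m * ennreal (tail_sum n (m * x)) + ennreal (Fbar p (family_threshold x))"
    by (simp add: nn_integral_add nn_integral_multc mean emeasure_Fbar)
  also have "\<dots> = ennreal (tail_sum (Suc n) x)"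
    using mean_gt_1 tail_sum_nonneg Fbar_nonneg
    by (simp add: tail_sum_Suc ennreal_mult'' add.commute)
  finally show ?case .
qed (simp add: marked_mean_def tail_sum_def)

lemma deviation_bound_Suc_le: "x > 0 \<Longrightarrow> deviation_bound (m * x) \<le> deviation_bound x"
  unfolding deviation_bound_def
  using mean_gt_1 A_pos var_nonneg sq_minus_mean_pos
  by (intro add_left_mono divide_left_mono mult_left_mono) simp_all

lemma prob_iid_sum_gw_gt:
  assumes x0: "x > 0" and k: "real k > family_threshold x"
  shows "measure_pmf.prob (iid_sum (gw p n) k) {z. real z > m ^ Suc n * x} \<ge> 1 - deviation_bound x"
proof -
  define V where "V = \<sigma>2 / (m\<^sup>2 - m)"
  define s where "s = m * x"
  define d where "d = real k - s"
  have V0: "V \<ge> 0" using var_nonneg sq_minus_mean_pos by (simp add: V_def)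
  have s0: "s > 0" using mean_gt_1 x0 by (simp add: s_def)
  then have As: "A * sqrt s > 0" using A_pos by simp
  have d: "d > A * sqrt s" using k by (simp add: family_threshold_def s_def d_def)
  then have d0: "d > 0" using As by simp
  have "measure_pmf.prob (iid_sum (gw p n) k) {z. real z \<le> m ^ n * s} \<le> real k * V / d\<^sup>2"
    using prob_iid_sum_gw_le[of s k n] d0 by (simp add: V_def d_def)
  also have "real k * V / d\<^sup>2 = V * (s / d\<^sup>2) + V * (1 / d)"
  proof -
    have "real k = s + d" by (simp add: d_def)
    then show ?thesis using d0 by (simp add: field_simps power2_eq_square)
  qed
  also have "\<dots> \<le> V * (1 / A\<^sup>2) + V * (1 / (A * sqrt s))"
  proof (intro add_mono mult_left_mono V0)
    have "(A * sqrt s)\<^sup>2 \<le> d\<^sup>2" using d As by (intro power_mono) auto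
    then show "s / d\<^sup>2 \<le> 1 / A\<^sup>2"
      using A_pos s0 d0 by (simp add: field_simps)
    show "1 / d \<le> 1 / (A * sqrt s)" using d As by (intro divide_left_mono) auto
  qed
  also have "\<dots> = deviation_bound x" by (simp add: deviation_bound_def V_def s_def)
  finally have "measure_pmf.prob (iid_sum (gw p n) k) {z. real z \<le> m ^ n * s} \<le> deviation_bound x" .
  moreover have "{z. real z > m ^ Suc n * x} = UNIV - {z. real z \<le> m ^ n * s}"
    by (auto simp: s_def algebra_simps)
  ultimately show ?thesis
    using measure_pmf.prob_compl[of "{z. real z \<le> m ^ n * s}" "iid_sum (gw p n) k"] by simp
qed

lemma marked_mean_ge:
  "x > 0 \<Longrightarrow> ennreal ((1 - deviation_bound x) * tail_sum n x) \<le> marked_mean n x"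
proof (induction n arbitrary: x)
  case (Suc n)
  define c where "c = 1 - deviation_bound x"
  define S where "S = tail_sum n (m * x)"
  show ?case
  proof (cases "c > 0")
    case False
    then show ?thesis
      using tail_sum_nonneg[of "Suc n" x] by (simp add: c_def ennreal_neg mult_nonpos_nonneg)
  next
    case True
    have mx: "m * x > 0" using mean_gt_1 Suc.prems by simp
    have S0: "S \<ge> 0" by (simp add: S_def tail_sum_nonneg)
    have "c * S \<le> (1 - deviation_bound (m * x)) * S"
      using deviation_bound_Suc_le[OF Suc.prems] S0 by (intro mult_right_mono) (auto simp: c_def)
    then have IH: "ennreal (c * S) \<le> marked_mean n (m * x)"
      using Suc.IH[OF mx] ennreal_leI order_trans unfolding S_def by blast
    have big: "ennreal c \<le> emeasure (iid_sum (gw p n) k) {z. real z > m ^ Suc n * x}"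
      if "real k > family_threshold x" for k
      using prob_iid_sum_gw_gt[OF Suc.prems that, of n]
      by (simp add: c_def measure_pmf.emeasure_eq_measure ennreal_leI)
    have "(1 - deviation_bound x) * tail_sum (Suc n) x = m * (c * S) + c * Fbar p (family_threshold x)"
      by (simp add: tail_sum_Suc c_def S_def algebra_simps)
    then have "ennreal ((1 - deviation_bound x) * tail_sum (Suc n) x)
        = ennreal m * ennreal (c * S) + ennreal c * ennreal (Fbar p (family_threshold x))"
      using mean_gt_1 True S0 Fbar_nonneg[of p] by (simp add: ennreal_mult)
    also have "\<dots> = (\<integral>\<^sup>+k. of_nat k * ennreal (c * S) + ennreal c * indicator {k. real k > family_threshold x} k \<partial>p)"
      by (simp add: nn_integral_add nn_integral_multc nn_integral_cmult_indicator mean emeasure_Fbar)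
    also have "\<dots> \<le> marked_mean (Suc n) x"
      unfolding marked_mean_Suc using IH big
      by (intro nn_integral_mono add_mono mult_left_mono) (auto simp: indicator_def)
    finally show ?thesis .
  qed
qed (simp add: tail_sum_def)

lemma marked_falling2_Suc_le_moments:
  assumes x0: "x > 0"
  shows "marked_falling2 (Suc n) x \<le> ennreal m * marked_falling2 n (m * x)
     + ennreal (\<sigma>2 + m\<^sup>2 - m) * (marked_mean n (m * x))\<^sup>2
     + ennreal ((\<sigma>2 + m\<^sup>2) / (m * x)) * (2 * marked_mean n (m * x))"
proof -
  let ?big = "\<lambda>k. indicator {k. real k > family_threshold x} k :: ennreal"
  let ?E = "marked_mean n (m * x)"
  have "(\<integral>\<^sup>+k. ?big k * of_nat k \<partial>p) \<le> ennreal ((\<sigma>2 + m\<^sup>2) / family_threshold x)"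
    using mean_gt_1 A_pos x0 by (intro nn_integral_tail_le) (simp add: family_threshold_def add_pos_nonneg)
  also have "\<dots> \<le> ennreal ((\<sigma>2 + m\<^sup>2) / (m * x))"
    using mean_gt_1 A_pos x0 var_nonneg
    by (intro ennreal_leI divide_left_mono) (auto simp: family_threshold_def add_pos_nonneg)
  finally have tail: "(\<integral>\<^sup>+k. ?big k * of_nat k \<partial>p) \<le> ennreal ((\<sigma>2 + m\<^sup>2) / (m * x))" .
  have "marked_falling2 (Suc n) x \<le> (\<integral>\<^sup>+k. of_nat k * marked_falling2 n (m * x)
     + of_nat (k * (k - 1)) * ?E\<^sup>2 + 2 * ?big k * (of_nat k * ?E) \<partial>p)"
    by (rule marked_falling2_Suc_le)
  also have "\<dots> = (\<integral>\<^sup>+k. of_nat k * marked_falling2 n (m * x)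
     + of_nat (k * (k - 1)) * ?E\<^sup>2 + ?big k * of_nat k * (2 * ?E) \<partial>p)"
    by (intro nn_integral_cong) (simp add: mult_ac)
  also have "\<dots> = ennreal m * marked_falling2 n (m * x) + ennreal (\<sigma>2 + m\<^sup>2 - m) * ?E\<^sup>2
      + (\<integral>\<^sup>+k. ?big k * of_nat k \<partial>p) * (2 * ?E)"
    by (simp add: nn_integral_add nn_integral_multc mean falling2[unfolded One_nat_def] del: of_nat_mult)
  also have "\<dots> \<le> ennreal m * marked_falling2 n (m * x) + ennreal (\<sigma>2 + m\<^sup>2 - m) * ?E\<^sup>2
      + ennreal ((\<sigma>2 + m\<^sup>2) / (m * x)) * (2 * ?E)"
    using tail by (intro add_left_mono mult_right_mono) auto
  finally show ?thesis .
qed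

lemma tail_sum_le:
  assumes x0: "x > 0"
  shows "tail_sum n x \<le> (\<sigma>2 + m\<^sup>2) / (m * (m - 1)) / x\<^sup>2"
proof -
  have "tail_sum n x \<le> (\<Sum>i<n. m ^ i * Fbar p (m ^ (i + 1) * x))"
    unfolding tail_sum_def using mean_gt_1 A_pos x0
    by (intro sum_mono mult_left_mono Fbar_antimono) auto
  also have "\<dots> \<le> (\<sigma>2 + m\<^sup>2) / (m * (m - 1)) / x\<^sup>2"
    using x0 by (rule Fbar_series_le)
  finally show ?thesis .
qed

lemma marked_falling2_le:
  "x \<ge> 1 \<Longrightarrow> marked_falling2 n x \<le> ennreal (falling2_const / x * tail_sum n x)"
proof (induction n arbitrary: x)
  case (Suc n)
  define K where "K = \<sigma>2 + m\<^sup>2 - m"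
  define S where "S = tail_sum n (m * x)"
  define a where "a = falling2_const / (m * x) * S"
  define c where "c = (\<sigma>2 + m\<^sup>2) / (m * x)"
  have x0: "x > 0" using Suc.prems by simp
  have mx1: "m * x \<ge> 1" using mean_gt_1 Suc.prems mult_mono[of 1 m 1 x] by simp
  have S0: "S \<ge> 0" by (simp add: S_def tail_sum_nonneg)
  have a0: "a \<ge> 0" and c0: "c \<ge> 0" and K0: "K \<ge> 0"
    using S0 x0 mean_gt_1 var_nonneg sq_minus_mean_pos falling2_const_nonneg
    by (simp_all add: a_def c_def K_def)
  have "marked_falling2 (Suc n) x \<le> ennreal m * marked_falling2 n (m * x)
      + ennreal K * (marked_mean n (m * x))\<^sup>2 + ennreal c * (2 * marked_mean n (m * x))"
    unfolding K_def c_def using x0 by (rule marked_falling2_Suc_le_moments)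
  also have "\<dots> \<le> ennreal m * ennreal a + ennreal K * (ennreal S)\<^sup>2 + ennreal c * (2 * ennreal S)"
    using Suc.IH[OF mx1] marked_mean_le_tail_sum[of n "m * x"]
    by (intro add_mono mult_left_mono power_mono) (auto simp: a_def S_def)
  also have "\<dots> = ennreal (m * a) + ennreal (K * S\<^sup>2) + ennreal (c * (2 * S))"
    using mean_gt_1 a0 c0 K0 S0 by (simp add: ennreal_mult ennreal_power)
  also have "\<dots> = ennreal (m * a + K * S\<^sup>2 + c * (2 * S))"
    using mean_gt_1 a0 c0 K0 S0 by simp
  also have "\<dots> \<le> ennreal (falling2_const / x * tail_sum (Suc n) x)"
  proof (rule ennreal_leI)
    have "S \<le> (\<sigma>2 + m\<^sup>2) / (m * (m - 1)) / (m * x)\<^sup>2"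
      unfolding S_def using x0 mean_gt_1 by (intro tail_sum_le) simp
    from falling2_const_step[OF Suc.prems S0 this Fbar_nonneg]
    show "m * a + K * S\<^sup>2 + c * (2 * S) \<le> falling2_const / x * tail_sum (Suc n) x"
      by (simp add: tail_sum_Suc a_def K_def c_def mult_ac flip: S_def)
  qed
  finally show ?case .
qed (simp add: marked_falling2_def)

lemma prob_gw_gt_ge:
  assumes x1: "x \<ge> 1"
  shows "measure_pmf.prob (gw p n) {k. real k / m ^ n > x}
           \<ge> (1 - deviation_bound x - falling2_const / x) * tail_sum n x"
proof -
  let ?G = "gw_marked n x"
  define P where "P = measure_pmf.prob ?G {zc. snd zc > 0}"
  define S where "S = tail_sum n x"
  have S0: "S \<ge> 0" and P0: "P \<ge> 0" by (simp_all add: S_def P_def tail_sum_nonneg)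
  have R0: "falling2_const / x * S \<ge> 0" using x1 S0 falling2_const_nonneg by simp
  have count: "(of_nat (snd zc) :: ennreal) \<le> indicator {zc. snd zc > 0} zc + of_nat (snd zc * (snd zc - 1))"
    for zc :: "nat \<times> nat"
  proof (cases "snd zc")
    case (Suc c)
    have "Suc c \<le> 1 + Suc c * c" by (cases c) auto
    then have "(of_nat (Suc c) :: ennreal) \<le> of_nat (1 + Suc c * c)" by (simp only: of_nat_le_iff)
    then show ?thesis using Suc by (simp add: indicator_def del: of_nat_mult mult_Suc)
  qed simp
  have "ennreal ((1 - deviation_bound x) * S) \<le> marked_mean n x"
    using marked_mean_ge[of x n] x1 by (simp add: S_def)
  also have "\<dots> \<le> (\<integral>\<^sup>+zc. indicator {zc. snd zc > 0} zc + of_nat (snd zc * (snd zc - 1)) \<partial>?G)"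
    unfolding marked_mean_def by (intro nn_integral_mono count)
  also have "\<dots> = ennreal P + marked_falling2 n x"
    by (simp add: nn_integral_add marked_falling2_def P_def measure_pmf.emeasure_eq_measure del: of_nat_mult)
  also have "\<dots> \<le> ennreal (P + falling2_const / x * S)"
    using marked_falling2_le[OF x1, of n] P0 R0 by (simp add: S_def)
  finally have "(1 - deviation_bound x) * S \<le> P + falling2_const / x * S"
    using P0 R0 by (subst (asm) ennreal_le_iff) auto
  then have "(1 - deviation_bound x - falling2_const / x) * S \<le> P" by (simp add: algebra_simps)
  also have "P \<le> measure_pmf.prob (gw p n) {k. real k / m ^ n > x}"
    unfolding P_def by (rule prob_gw_gt_ge_marked)
  finally show ?thesis by (simp add: S_def)
qed

end

context gw_second_moment
begin

lemma gw_tail_lower_bound: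
  assumes A0: "A > 0" and \<epsilon>0: "\<epsilon> > 0"
  shows "\<exists>x0. \<forall>x\<ge>x0. \<forall>n.
           (1 - \<sigma>2 / ((m\<^sup>2 - m) * A\<^sup>2) - \<epsilon>) * (\<Sum>i<n. m ^ i * Fbar p (m ^ (i + 1) * x + A * sqrt (m ^ (i + 1) * x)))
             \<le> measure_pmf.prob (gw p n) {k. real k / m ^ n > x}"
proof -
  interpret gw_threshold p m \<sigma>2 A
    by (rule gw_threshold.intro[OF gw_second_moment_axioms]) (unfold_locales, fact A0)
  have "((\<lambda>x. \<sigma>2 / (m\<^sup>2 - m) / (A * sqrt (m * x)) + falling2_const / x) \<longlongrightarrow> 0) at_top"
    using A0 mean_gt_1
    by (intro tendsto_add_zero tendsto_divide_0[OF tendsto_const] filterlim_at_top_imp_at_infinity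
        filterlim_tendsto_pos_mult_at_top[OF tendsto_const] filterlim_compose[OF sqrt_at_top] filterlim_ident)
      simp_all
  then have "eventually (\<lambda>x. \<sigma>2 / (m\<^sup>2 - m) / (A * sqrt (m * x)) + falling2_const / x < \<epsilon>) at_top"
    using \<epsilon>0 by (rule order_tendstoD)
  then have "eventually (\<lambda>x. \<sigma>2 / (m\<^sup>2 - m) / (A * sqrt (m * x)) + falling2_const / x < \<epsilon> \<and> x \<ge> 1) at_top"
    using eventually_ge_at_top by (rule eventually_conj)
  then obtain x0 where x0: "\<And>x. x \<ge> x0 \<Longrightarrow> \<sigma>2 / (m\<^sup>2 - m) / (A * sqrt (m * x)) + falling2_const / x < \<epsilon> \<and> x \<ge> 1"
    by (auto simp: eventually_at_top_linorder)
  show ?thesis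
  proof (intro exI allI impI)
    fix x n assume "x \<ge> x0"
    with x0 have small: "\<sigma>2 / (m\<^sup>2 - m) / (A * sqrt (m * x)) + falling2_const / x < \<epsilon>" and x1: "x \<ge> 1"
      by auto
    have "(1 - \<sigma>2 / ((m\<^sup>2 - m) * A\<^sup>2) - \<epsilon>) * tail_sum n x \<le> (1 - deviation_bound x - falling2_const / x) * tail_sum n x"
      using small by (intro mult_right_mono tail_sum_nonneg) (simp add: deviation_bound_def)
    also have "\<dots> \<le> measure_pmf.prob (gw p n) {k. real k / m ^ n > x}"
      using x1 by (rule prob_gw_gt_ge)
    finally show "(1 - \<sigma>2 / ((m\<^sup>2 - m) * A\<^sup>2) - \<epsilon>) * (\<Sum>i<n. m ^ i * Fbar p (m ^ (i + 1) * x + A * sqrt (m ^ (i + 1) * x)))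
        \<le> measure_pmf.prob (gw p n) {k. real k / m ^ n > x}"
      by (simp add: tail_sum_def)
  qed
qed

text \<open>Apply \<open>gw_tail_lower_bound\<close> with \<open>\<epsilon> / 4\<close> and \<open>A\<close> so large that \<open>\<sigma>2 / ((m\<^sup>2 - m) * A\<^sup>2) \<le> \<epsilon> / 4\<close>;
  insensitivity then costs a factor \<open>\<delta> = (1 - \<epsilon>) / (1 - \<epsilon> / 2)\<close> in each term.\<close>
lemma gw_tail_lower_bound_sqrt_insensitive:
  assumes ins: "sqrt_insensitive p" and \<epsilon>0: "\<epsilon> > 0"
  shows "\<exists>x0. \<forall>x\<ge>x0. \<forall>n.
           (1 - \<epsilon>) * (\<Sum>i<n. m ^ i * Fbar p (m ^ (i + 1) * x)) \<le> measure_pmf.prob (gw p n) {k. real k / m ^ n > x}"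
proof (cases "\<epsilon> < 1")
  case False
  have "(1 - \<epsilon>) * (\<Sum>i<n. m ^ i * Fbar p (m ^ (i + 1) * x)) \<le> 0" for n x
    using False mean_gt_1 by (intro mult_nonpos_nonneg sum_nonneg mult_nonneg_nonneg) (auto simp: Fbar_nonneg)
  then show ?thesis by (meson measure_nonneg order.trans)
next
  case True
  define V where "V = \<sigma>2 / (m\<^sup>2 - m)"
  define A where "A = sqrt (4 * V / \<epsilon>) + 1"
  define \<delta> where "\<delta> = (1 - \<epsilon>) / (1 - \<epsilon> / 2)"
  have V0: "V \<ge> 0" using var_nonneg sq_minus_mean_pos by (simp add: V_def)
  have A0: "A > 0" using V0 \<epsilon>0 by (simp add: A_def add_nonneg_pos)
  have "4 * V / \<epsilon> \<le> A\<^sup>2"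
    using V0 \<epsilon>0 real_sqrt_pow2[of "4 * V / \<epsilon>"] power_mono[of "sqrt (4 * V / \<epsilon>)" A 2]
    by (simp add: A_def)
  then have "4 * V \<le> \<epsilon> * A\<^sup>2" using \<epsilon>0 by (simp add: divide_le_eq mult.commute)
  then have "V / A\<^sup>2 \<le> \<epsilon> / 4" using A0 by (simp add: field_simps)
  then have VA: "\<sigma>2 / ((m\<^sup>2 - m) * A\<^sup>2) \<le> \<epsilon> / 4" by (simp add: V_def)
  have \<delta>1: "\<delta> < 1" and \<delta>0: "\<delta> \<ge> 0" and \<delta>: "(1 - \<epsilon> / 2) * \<delta> = 1 - \<epsilon>"
    using True \<epsilon>0 by (simp_all add: \<delta>_def divide_less_eq)
  obtain x1 where x1: "\<And>x n. x \<ge> x1 \<Longrightarrow>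
      (1 - \<sigma>2 / ((m\<^sup>2 - m) * A\<^sup>2) - \<epsilon> / 4) * (\<Sum>i<n. m ^ i * Fbar p (m ^ (i + 1) * x + A * sqrt (m ^ (i + 1) * x)))
        \<le> measure_pmf.prob (gw p n) {k. real k / m ^ n > x}"
    using gw_tail_lower_bound[OF A0, of "\<epsilon> / 4"] \<epsilon>0 by auto
  obtain y0 where y0: "\<And>y. y \<ge> y0 \<Longrightarrow> \<delta> * Fbar p y \<le> Fbar p (y + A * sqrt y)"
    using sqrt_insensitive_scaled[OF ins A0 \<delta>1] by (auto simp: eventually_at_top_linorder)
  show ?thesis
  proof (intro exI[of _ "max x1 (max y0 0)"] allI impI)
    fix x n assume x: "max x1 (max y0 0) \<le> x"
    have shifted: "\<delta> * Fbar p (m ^ (i + 1) * x) \<le> Fbar p (m ^ (i + 1) * x + A * sqrt (m ^ (i + 1) * x))" for i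
    proof (rule y0)
      have "1 \<le> m ^ (i + 1)" using mean_gt_1 by (intro one_le_power) simp
      then have "x \<le> m ^ (i + 1) * x" using x mult_right_mono[of 1 "m ^ (i + 1)" x] by simp
      then show "y0 \<le> m ^ (i + 1) * x" using x by linarith
    qed
    have "(1 - \<epsilon>) * (\<Sum>i<n. m ^ i * Fbar p (m ^ (i + 1) * x))
        = (1 - \<epsilon> / 2) * (\<Sum>i<n. m ^ i * (\<delta> * Fbar p (m ^ (i + 1) * x)))"
      by (simp add: sum_distrib_left mult_ac flip: \<delta>)
    also have "\<dots> \<le> (1 - \<sigma>2 / ((m\<^sup>2 - m) * A\<^sup>2) - \<epsilon> / 4) *
        (\<Sum>i<n. m ^ i * Fbar p (m ^ (i + 1) * x + A * sqrt (m ^ (i + 1) * x)))"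
      using True VA mean_gt_1 shifted \<delta>0
      by (intro mult_mono sum_mono mult_left_mono sum_nonneg mult_nonneg_nonneg) (auto simp: Fbar_nonneg)
    also have "\<dots> \<le> measure_pmf.prob (gw p n) {k. real k / m ^ n > x}"
      using x by (intro x1) simp
    finally show "(1 - \<epsilon>) * (\<Sum>i<n. m ^ i * Fbar p (m ^ (i + 1) * x)) \<le> measure_pmf.prob (gw p n) {k. real k / m ^ n > x}" .
  qed
qed

end

theorem lemma2:
  fixes p :: "nat pmf"
  defines "m \<equiv> off_mean p"
  defines "\<sigma>2 \<equiv> off_var p"
  assumes var_fin: "integrable (measure_pmf p) (\<lambda>k. (real k)\<^sup>2)"
  assumes mean_gt: "m > 1"
  shows "(\<forall>A>0. \<forall>\<epsilon>>0. \<exists>x0. \<forall>x\<ge>x0. \<forall>n\<ge>1.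
            measure_pmf.prob (gw p n) {k. real k / m ^ n > x}
              \<ge> (1 - \<sigma>2 / ((m\<^sup>2 - m) * A\<^sup>2) - \<epsilon>) *
                 (\<Sum>i<n. m ^ i * Fbar p (m ^ (i+1) * x + A * sqrt (m ^ (i+1) * x))))
       \<and> (sqrt_insensitive p \<longrightarrow>
           (\<forall>\<epsilon>>0. \<exists>x0. \<forall>x\<ge>x0. \<forall>n\<ge>1.
              measure_pmf.prob (gw p n) {k. real k / m ^ n > x}
                \<ge> (1 - \<epsilon>) * (\<Sum>i<n. m ^ i * Fbar p (m ^ (i+1) * x))))"
proof -
  interpret gw_second_moment p m \<sigma>2
    using var_fin mean_gt
    by unfold_locales
      (simp_all add: m_def \<sigma>2_def nn_integral_eq_off_mean nn_integral_falling2_eq_off_var[unfolded One_nat_def]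
        off_var_nonneg del: of_nat_mult)
  show ?thesis
    using gw_tail_lower_bound gw_tail_lower_bound_sqrt_insensitive by meson
qed

end
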